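(* Let $\mathcal{X}\subset\mathbb{R}^p$, $\mathcal{Y}\subset\mathbb{R}^q$ be closed convex sets with $\mathcal{Z}=\mathcal{X}\times\mathcal{Y}$ compact and $\max_{\mathbf{z},\mathbf{z}'\in\mathcal{Z}}\|\mathbf{z}-\mathbf{z}'\|\le D$, let $f:\mathcal{X}\times\mathcal{Y}\to\mathbb{R}$ be continuous, and let $F(\mathbf{x},\mathbf{y})=\partial_xf(\mathbf{x},\mathbf{y})\times\partial_y[-f(\mathbf{x},\mathbf{y})]$ be $\rho$-weakly monotone ($\rho>0$), single-valued and $L$-Lipschitz continuous on $\mathcal{Z}$, with $\mathrm{MVI}(F,\mathcal{Z})$ having a solution. Run the inexact proximal point method with $\gamma=\frac1{2\rho}$, $\theta_k=(k+1)^\alpha$ ($\alpha\ge1$), and $K=\frac{16\rho^2D^2(\alpha+1)}{\epsilon^2}$ stages: from $\mathbf{z}_0\in\mathcal{Z}$, for $k=0,\dots,K-1$, with $F_k(\mathbf{z})=F(\mathbf{z})+\gamma^{-1}(\mathbf{z}-\mathbf{z}_k)$, let $\mathbf{z}_{k+1}=\mathbf{z}^{(T_k)}$ where $\mathbf{z}^{(0)}=\mathbf{z}_k$ and $\mathbf{z}^{(t+1)}=\mathrm{Proj}_{\mathcal{Z}}(\mathbf{z}^{(t)}-\eta_kF_k(\mathbf{z}^{(t)}))$ with $\eta_k=\frac{\rho}{2(L+2\rho)^2}$ and $T_k=1+\frac{4(L+2\rho)^2}{\rho^2}\log\big(\frac{8(L+2\rho)^2(k+1)}{\rho^2}\big)$.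 Output $\mathbf{z}_\tau$ with $\mathrm{Prob}(\tau=k)=\theta_k/\sum_{l=0}^{K-1}\theta_l$ and let $\bar{\mathbf{z}}_\tau=(\bar{\mathbf{u}}_\tau,\bar{\mathbf{v}}_\tau)$ be the solution of $\mathrm{SVI}(F^\gamma_{\mathbf{z}_\tau},\mathcal{Z})$ with $F^\gamma_{\mathbf{w}}(\mathbf{z})=F(\mathbf{z})+\gamma^{-1}(\mathbf{z}-\mathbf{w})$. Then $$\mathbb{E}\|\mathbf{z}_\tau-\bar{\mathbf{z}}_\tau\|^2\le\gamma^2\epsilon^2,\qquad\mathbb{E}\big[\mathrm{dist}^2\big(0,\partial(f(\bar{\mathbf{u}}_\tau,\bar{\mathbf{v}}_\tau)+1_{\mathcal{Z}}(\bar{\mathbf{u}}_\tau,\bar{\mathbf{v}}_\tau))\big)\big]\le\epsilon^2,$$ and the total iteration complexity $\sum_{k<K}T_k$ is $O\big(\log(\frac1\epsilon)\frac{L^2}{\epsilon^2}\big)$.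
   Context: $\partial$ is the Fréchet subdifferential ($\partial h(\mathbf{x})=\{\boldsymbol{\zeta}:h(\mathbf{x}')\ge h(\mathbf{x})+\boldsymbol{\zeta}^\top(\mathbf{x}'-\mathbf{x})+o(\|\mathbf{x}'-\mathbf{x}\|)\}$), $\partial_x,\partial_y$ partial ones; $1_{\mathcal{S}}$ is the indicator of $\mathcal{S}$; $\partial(f+1_{\mathcal{Z}})(\mathbf{x},\mathbf{y}):=\partial_x[f(\mathbf{x},\mathbf{y})+1_{\mathcal{X}}(\mathbf{x})]\times\partial_y[-f(\mathbf{x},\mathbf{y})+1_{\mathcal{Y}}(\mathbf{y})]$; $\mathrm{dist}$ is Euclidean distance; $\mathrm{Proj}_{\mathcal{Z}}$ Euclidean projection. $F$ is $\rho$-weakly monotone if $\langle F(\mathbf{z})-F(\mathbf{z}'),\mathbf{z}-\mathbf{z}'\rangle\ge-\rho\|\mathbf{z}-\mathbf{z}'\|^2$. $\mathrm{MVI}(F,\mathcal{Z})$: find $\mathbf{z}_*\in\mathcal{Z}$ with $\langle F(\mathbf{z}),\mathbf{z}-\mathbf{z}_*\rangle\ge0$ for all $\mathbf{z}\in\mathcal{Z}$. $\mathrm{SVI}(G,\mathcal{Z})$: find $\mathbf{z}^*\in\mathcal{Z}$ with $\langle G(\mathbf{z}^* ),\mathbf{z}-\mathbf{z}^*\rangle\ge0$ for all $\mathbf{z}\in\mathcal{Z}$ (unique for $G=F^\gamma_{\mathbf{w}}$). *)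

theory Defs
  imports "HOL-Analysis.Analysis" "HOL-Library.Landau_Symbols"
begin

text \<open>Frechet subdifferential of the extended-valued function h + 1_S at x
  (empty when x is outside S, where h + 1_S is +infinity).\<close>
definition frechet_subdiff_on :: "'a::real_inner set \<Rightarrow> ('a \<Rightarrow> real) \<Rightarrow> 'a \<Rightarrow> 'a set" where
  "frechet_subdiff_on S h x =
     {\<zeta>. x \<in> S \<and> (\<forall>e>0. \<exists>d>0. \<forall>x'\<in>S. norm (x' - x) < d \<longrightarrow>
            h x' \<ge> h x + inner \<zeta> (x' - x) - e * norm (x' - x))}"

definition frechet_subdiff :: "('a::real_inner \<Rightarrow> real) \<Rightarrow> 'a \<Rightarrow> 'a set" where
  "frechet_subdiff h x = frechet_subdiff_on UNIV h x"

text \<open>The set partial(f + 1_Z)(x,y) := partial_x[f + 1_X](x,y) times partial_y[-f + 1_Y](x,y).\<close>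
definition subdiff_plus_ind ::
  "'a::real_inner set \<Rightarrow> 'b::real_inner set \<Rightarrow> ('a \<Rightarrow> 'b \<Rightarrow> real) \<Rightarrow> 'a \<times> 'b \<Rightarrow> ('a \<times> 'b) set" where
  "subdiff_plus_ind X Y f z =
     frechet_subdiff_on X (\<lambda>x. f x (snd z)) (fst z) \<times> frechet_subdiff_on Y (\<lambda>y. - f (fst z) y) (snd z)"

definition weakly_monotone_on :: "real \<Rightarrow> 'a::real_inner set \<Rightarrow> ('a \<Rightarrow> 'a) \<Rightarrow> bool" where
  "weakly_monotone_on \<rho> Z F \<longleftrightarrow>
     (\<forall>z\<in>Z. \<forall>z'\<in>Z. inner (F z - F z') (z - z') \<ge> - \<rho> * (norm (z - z'))\<^sup>2)"

definition mvi_sol :: "('a::real_inner \<Rightarrow> 'a) \<Rightarrow> 'a set \<Rightarrow> 'a \<Rightarrow> bool" where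
  "mvi_sol F Z z \<longleftrightarrow> z \<in> Z \<and> (\<forall>z'\<in>Z. inner (F z') (z' - z) \<ge> 0)"

definition svi_sol :: "('a::real_inner \<Rightarrow> 'a) \<Rightarrow> 'a set \<Rightarrow> 'a \<Rightarrow> bool" where
  "svi_sol G Z z \<longleftrightarrow> z \<in> Z \<and> (\<forall>z'\<in>Z. inner (G z) (z' - z) \<ge> 0)"

definition pg_iter ::
  "('a::{real_inner,heine_borel} \<Rightarrow> 'a) \<Rightarrow> 'a set \<Rightarrow> real \<Rightarrow> real \<Rightarrow> 'a \<Rightarrow> nat \<Rightarrow> 'a" where
  "pg_iter F Z \<gamma> \<eta> w t =
     ((\<lambda>z. closest_point Z (z - \<eta> *\<^sub>R (F z + (1 / \<gamma>) *\<^sub>R (z - w)))) ^^ t) w"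

primrec ippm ::
  "('a::{real_inner,heine_borel} \<Rightarrow> 'a) \<Rightarrow> 'a set \<Rightarrow> real \<Rightarrow> (nat \<Rightarrow> real) \<Rightarrow> (nat \<Rightarrow> nat) \<Rightarrow> 'a \<Rightarrow> nat \<Rightarrow> 'a" where
  "ippm F Z \<gamma> \<eta> T z0 0 = z0"
| "ippm F Z \<gamma> \<eta> T z0 (Suc k) = pg_iter F Z \<gamma> (\<eta> k) (ippm F Z \<gamma> \<eta> T z0 k) (T k)"

end

theory Submission
  imports Defs
begin

text \<open>
  Stage k of the method solves, inexactly, the proximal problem SVI(z \<mapsto> F z + 2\<rho>(z - z_k), Z).
  Its operator is \<rho>-strongly monotone and (L + 2\<rho>)-Lipschitz, so projected gradient with step
  \<rho>/(2(L + 2\<rho>)^2) contracts with factor sqrt(1 - 3\<rho>^2/(4(L + 2\<rho>)^2)), and T_k steps leave an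
  error of at most D/(k + 1). Testing the SVI against an MVI solution z* gives
  |z_k - z*|^2 \<ge> |zbar_k - z*|^2 + |z_k - zbar_k|^2 for the exact proximal point zbar_k, hence
  |z_k - zbar_k|^2 \<le> a_k - a_(k+1) + 3D^2/(k + 1) with a_k = |z_k - z*|^2. Abel summation against
  the nondecreasing weights (k + 1)^\<alpha>, whose sum up to K is at least K^(\<alpha>+1)/(\<alpha> + 1), bounds
  the weighted average by 4D^2(\<alpha> + 1)/K. The SVI at zbar_k also places 2\<rho>(z_k - zbar_k) in the
  subdifferential of f + 1_Z at zbar_k, and each T_k is O(log K), which gives the complexity.
\<close>

section \<open>Projected gradient for strongly monotone variational inequalities\<close>

lemma funpow_in:
  assumes "P ` Z \<subseteq> Z" "w \<in> Z"
  shows "(P ^^ t) w \<in> Z"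
  using assms by (induction t) auto

lemma funpow_dist_fixpoint_le:
  assumes "c-lipschitz_on Z P" "P ` Z \<subseteq> Z" "zb \<in> Z" "P zb = zb" "w \<in> Z"
  shows "dist ((P ^^ t) w) zb \<le> c ^ t * dist w zb"
proof (induction t)
  case (Suc t)
  have "dist ((P ^^ Suc t) w) zb = dist (P ((P ^^ t) w)) (P zb)" using assms(4) by simp
  also have "\<dots> \<le> c * dist ((P ^^ t) w) zb"
    using lipschitz_onD[OF assms(1) funpow_in[OF assms(2,5)] assms(3)] .
  also have "\<dots> \<le> c * (c ^ t * dist w zb)"
    using Suc lipschitz_on_nonneg[OF assms(1)] by (rule mult_left_mono)
  finally show ?case by simp
qed simp

definition strongly_monotone_on :: "real \<Rightarrow> 'a::real_inner set \<Rightarrow> ('a \<Rightarrow> 'a) \<Rightarrow> bool" where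
  "strongly_monotone_on \<mu> Z G \<longleftrightarrow>
     (\<forall>z\<in>Z. \<forall>z'\<in>Z. inner (G z - G z') (z - z') \<ge> \<mu> * (norm (z - z'))\<^sup>2)"

definition proj_grad_step :: "'a::{real_inner,heine_borel} set \<Rightarrow> real \<Rightarrow> ('a \<Rightarrow> 'a) \<Rightarrow> 'a \<Rightarrow> 'a" where
  "proj_grad_step Z \<eta> G z = closest_point Z (z - \<eta> *\<^sub>R G z)"

lemma svi_sol_iff_proj_grad_fixpoint:
  assumes "convex Z" "closed Z" "\<eta> > 0"
  shows "svi_sol G Z z \<longleftrightarrow> z \<in> Z \<and> proj_grad_step Z \<eta> G z = z"
proof
  assume svi: "svi_sol G Z z"
  then have z: "z \<in> Z" by (simp add: svi_sol_def)
  have dot: "inner ((z - \<eta> *\<^sub>R G z) - z) (x - z) \<le> 0" if "x \<in> Z" for x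
    using svi that \<open>\<eta> > 0\<close> by (simp add: svi_sol_def)
  have "dist (z - \<eta> *\<^sub>R G z) z \<le> dist (z - \<eta> *\<^sub>R G z) x" if "x \<in> Z" for x
    using dot[OF that] inner_ge_zero[of "x - z"] unfolding dist_norm norm_le
    by (simp add: inner_diff_left inner_diff_right inner_commute algebra_simps)
  then have "z = closest_point Z (z - \<eta> *\<^sub>R G z)"
    using closest_point_unique[OF assms(1,2) z] by blast
  with z show "z \<in> Z \<and> proj_grad_step Z \<eta> G z = z" by (simp add: proj_grad_step_def)
next
  assume fixpoint: "z \<in> Z \<and> proj_grad_step Z \<eta> G z = z"
  have "inner (G z) (x - z) \<ge> 0" if "x \<in> Z" for x
  proof -
    have "inner ((z - \<eta> *\<^sub>R G z) - z) (x - z) \<le> 0"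
      using closest_point_dot[OF assms(1,2) that, of "z - \<eta> *\<^sub>R G z"] fixpoint
      by (simp add: proj_grad_step_def)
    then show ?thesis using \<open>\<eta> > 0\<close> by (simp add: zero_le_mult_iff)
  qed
  with fixpoint show "svi_sol G Z z" by (simp add: svi_sol_def)
qed

lemma proj_grad_step_contraction:
  fixes G :: "'a::{real_inner,heine_borel} \<Rightarrow> 'a"
  assumes "convex Z" "closed Z" "Z \<noteq> {}"
    and "strongly_monotone_on \<mu> Z G" "L-lipschitz_on Z G" "0 < \<mu>" "\<mu> \<le> L"
  shows "(sqrt (1 - 3 * \<mu>\<^sup>2 / (4 * L\<^sup>2)))-lipschitz_on Z (proj_grad_step Z (\<mu> / (2 * L\<^sup>2)) G)"
proof (rule lipschitz_onI)
  have "3 * \<mu>\<^sup>2 \<le> 4 * L\<^sup>2"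
    using power_mono[OF assms(7), of 2] assms(6) zero_le_power2[of \<mu>] by linarith
  then show "0 \<le> sqrt (1 - 3 * \<mu>\<^sup>2 / (4 * L\<^sup>2))"
    using assms(6,7) by (simp add: field_simps)
  fix z z' assume zz': "z \<in> Z" "z' \<in> Z"
  define \<eta> where "\<eta> = \<mu> / (2 * L\<^sup>2)"
  define d where "d = z - z'"
  define g where "g = G z - G z'"
  have "dist (proj_grad_step Z \<eta> G z) (proj_grad_step Z \<eta> G z') \<le> norm (d - \<eta> *\<^sub>R g)"
    using closest_point_lipschitz[OF assms(1-3), of "z - \<eta> *\<^sub>R G z" "z' - \<eta> *\<^sub>R G z'"]
    by (simp add: proj_grad_step_def dist_norm d_def g_def algebra_simps)
  moreover have "(norm (d - \<eta> *\<^sub>R g))\<^sup>2 \<le> (1 - 3 * \<mu>\<^sup>2 / (4 * L\<^sup>2)) * (norm d)\<^sup>2"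
  proof -
    have "\<eta> > 0" using assms(6,7) by (simp add: \<eta>_def)
    moreover have "\<mu> * (norm d)\<^sup>2 \<le> inner g d"
      using assms(4) zz' by (simp add: strongly_monotone_on_def g_def d_def)
    ultimately have "2 * \<eta> * (\<mu> * (norm d)\<^sup>2) \<le> 2 * \<eta> * inner g d" by simp
    moreover have "\<eta>\<^sup>2 * (norm g)\<^sup>2 \<le> \<eta>\<^sup>2 * (L\<^sup>2 * (norm d)\<^sup>2)"
      using lipschitz_on_normD[OF assms(5) zz'] unfolding g_def d_def
      by (intro mult_left_mono) (auto simp: power_mono power_mult_distrib[symmetric])
    moreover have "(norm (d - \<eta> *\<^sub>R g))\<^sup>2 = (norm d)\<^sup>2 - 2 * \<eta> * inner g d + \<eta>\<^sup>2 * (norm g)\<^sup>2"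
      unfolding power2_norm_eq_inner
      by (simp add: inner_diff_left inner_diff_right inner_commute algebra_simps power2_eq_square
          del: dot_square_norm)
    ultimately have "(norm (d - \<eta> *\<^sub>R g))\<^sup>2 \<le> (norm d)\<^sup>2 - 2 * \<eta> * (\<mu> * (norm d)\<^sup>2) + \<eta>\<^sup>2 * (L\<^sup>2 * (norm d)\<^sup>2)"
      by linarith
    also have "\<dots> = (1 - 3 * \<mu>\<^sup>2 / (4 * L\<^sup>2)) * (norm d)\<^sup>2"
      using assms(6,7) by (simp add: \<eta>_def field_simps power2_eq_square)
    finally show ?thesis .
  qed
  then have "norm (d - \<eta> *\<^sub>R g) \<le> sqrt (1 - 3 * \<mu>\<^sup>2 / (4 * L\<^sup>2)) * dist z z'"
    by (metis d_def dist_norm norm_ge_zero real_le_rsqrt real_sqrt_mult real_sqrt_abs abs_norm_cancel)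
  ultimately show "dist (proj_grad_step Z \<eta> G z) (proj_grad_step Z \<eta> G z') \<le> sqrt (1 - 3 * \<mu>\<^sup>2 / (4 * L\<^sup>2)) * dist z z'"
    by linarith
qed

lemma ex1_svi_sol:
  fixes G :: "'a::{real_inner,heine_borel} \<Rightarrow> 'a"
  assumes "convex Z" "closed Z" "Z \<noteq> {}"
    and "strongly_monotone_on \<mu> Z G" "L-lipschitz_on Z G" "0 < \<mu>" "\<mu> \<le> L"
  shows "\<exists>!z. svi_sol G Z z"
proof -
  define c where "c = sqrt (1 - 3 * \<mu>\<^sup>2 / (4 * L\<^sup>2))"
  define \<eta> where "\<eta> = \<mu> / (2 * L\<^sup>2)"
  have contr: "c-lipschitz_on Z (proj_grad_step Z \<eta> G)"
    unfolding c_def \<eta>_def by (rule proj_grad_step_contraction[OF assms])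
  have "c < 1" using assms(6,7) by (simp add: c_def)
  have "\<exists>!z\<in>Z. proj_grad_step Z \<eta> G z = z"
  proof (rule Banach_fix)
    show "complete Z" using assms(2) by (simp add: complete_eq_closed)
    show "proj_grad_step Z \<eta> G ` Z \<subseteq> Z"
      using closest_point_in_set[OF assms(2,3)] by (auto simp: proj_grad_step_def)
  qed (use assms(3) \<open>c < 1\<close> lipschitz_on_nonneg[OF contr] lipschitz_onD[OF contr] in auto)
  moreover have "\<eta> > 0" using assms(6,7) by (simp add: \<eta>_def)
  ultimately show ?thesis
    using svi_sol_iff_proj_grad_fixpoint[OF assms(1,2)] by auto
qed

section \<open>One stage of the inexact proximal point method\<close>

text \<open>The definite description
  is meaningful only for \<open>\<sigma> > \<rho>\<close>, where the solution exists and is unique (\<open>svi_prox_sol\<close>).\<close>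

definition prox_sol :: "('a::real_inner \<Rightarrow> 'a) \<Rightarrow> 'a set \<Rightarrow> real \<Rightarrow> 'a \<Rightarrow> 'a" where
  "prox_sol F Z \<sigma> w = (THE z. svi_sol (\<lambda>z. F z + \<sigma> *\<^sub>R (z - w)) Z z)"

lemma strongly_monotone_on_prox:
  assumes "weakly_monotone_on \<rho> Z F"
  shows "strongly_monotone_on (\<sigma> - \<rho>) Z (\<lambda>z. F z + \<sigma> *\<^sub>R (z - w))"
  unfolding strongly_monotone_on_def
proof (intro ballI)
  fix z z' assume "z \<in> Z" "z' \<in> Z"
  then have "- \<rho> * (norm (z - z'))\<^sup>2 \<le> inner (F z - F z') (z - z')"
    using assms by (simp add: weakly_monotone_on_def)
  moreover have "(F z + \<sigma> *\<^sub>R (z - w)) - (F z' + \<sigma> *\<^sub>R (z' - w)) = (F z - F z') + \<sigma> *\<^sub>R (z - z')"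
    by (simp add: algebra_simps)
  ultimately show "(\<sigma> - \<rho>) * (norm (z - z'))\<^sup>2
      \<le> inner ((F z + \<sigma> *\<^sub>R (z - w)) - (F z' + \<sigma> *\<^sub>R (z' - w))) (z - z')"
    by (simp add: inner_add_left power2_norm_eq_inner algebra_simps)
qed

lemma lipschitz_on_prox:
  fixes F :: "'a::real_normed_vector \<Rightarrow> 'a"
  assumes "L-lipschitz_on Z F" "0 \<le> \<sigma>"
  shows "(L + \<sigma>)-lipschitz_on Z (\<lambda>z. F z + \<sigma> *\<^sub>R (z - w))"
proof -
  have "(L + \<sigma> * (1 + 0))-lipschitz_on Z (\<lambda>z. F z + \<sigma> *\<^sub>R (z - w))"
    by (intro lipschitz_intros assms)
  then show ?thesis by simp
qed

lemma svi_prox_sol: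
  fixes F :: "'a::{real_inner,heine_borel} \<Rightarrow> 'a"
  assumes "convex Z" "closed Z" "Z \<noteq> {}"
    and "weakly_monotone_on \<rho> Z F" "L-lipschitz_on Z F" "0 \<le> \<rho>" "\<rho> < \<sigma>"
  shows "svi_sol (\<lambda>z. F z + \<sigma> *\<^sub>R (z - w)) Z (prox_sol F Z \<sigma> w)"
proof -
  have "\<exists>!z. svi_sol (\<lambda>z. F z + \<sigma> *\<^sub>R (z - w)) Z z"
    using ex1_svi_sol[OF assms(1-3) strongly_monotone_on_prox[OF assms(4)] lipschitz_on_prox[OF assms(5)]]
      assms(6,7) lipschitz_on_nonneg[OF assms(5)] by simp
  then show ?thesis unfolding prox_sol_def by (rule theI')
qed

lemma pg_iter_eq_funpow:
  "pg_iter F Z \<gamma> \<eta> w t = (proj_grad_step Z \<eta> (\<lambda>z. F z + (1 / \<gamma>) *\<^sub>R (z - w)) ^^ t) w"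
  by (simp add: pg_iter_def proj_grad_step_def[abs_def])

lemma pg_iter_in:
  assumes "closed Z" "Z \<noteq> {}" "w \<in> Z"
  shows "pg_iter F Z \<gamma> \<eta> w t \<in> Z"
  unfolding pg_iter_eq_funpow
  by (rule funpow_in) (use closest_point_in_set[OF assms(1,2)] assms(3) in \<open>auto simp: proj_grad_step_def\<close>)

lemma ippm_in:
  assumes "closed Z" "Z \<noteq> {}" "z0 \<in> Z"
  shows "ippm F Z \<gamma> \<eta> T z0 k \<in> Z"
  by (induction k) (simp_all add: assms pg_iter_in)

lemma pg_iter_dist_prox_sol:
  fixes F :: "'a::{real_inner,heine_borel} \<Rightarrow> 'a"
  assumes "convex Z" "closed Z" "w \<in> Z"
    and "weakly_monotone_on \<rho> Z F" "L-lipschitz_on Z F" "0 < \<rho>"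
  shows "dist (pg_iter F Z (1 / (2 * \<rho>)) (\<rho> / (2 * (L + 2 * \<rho>)\<^sup>2)) w t) (prox_sol F Z (2 * \<rho>) w)
    \<le> sqrt (1 - 3 * \<rho>\<^sup>2 / (4 * (L + 2 * \<rho>)\<^sup>2)) ^ t * dist w (prox_sol F Z (2 * \<rho>) w)"
proof -
  define G where "G = (\<lambda>z. F z + (2 * \<rho>) *\<^sub>R (z - w))"
  define P where "P = proj_grad_step Z (\<rho> / (2 * (L + 2 * \<rho>)\<^sup>2)) G"
  have Z: "Z \<noteq> {}" using assms(3) by blast
  have L: "0 \<le> L" using lipschitz_on_nonneg[OF assms(5)] .
  have mono: "strongly_monotone_on \<rho> Z G"
    using strongly_monotone_on_prox[OF assms(4), of "2 * \<rho>" w] by (simp add: G_def)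
  have lip: "(L + 2 * \<rho>)-lipschitz_on Z G"
    using lipschitz_on_prox[OF assms(5), of "2 * \<rho>" w] assms(6) by (simp add: G_def)
  have svi: "svi_sol G Z (prox_sol F Z (2 * \<rho>) w)"
    using svi_prox_sol[OF assms(1,2) Z assms(4,5)] assms(6) by (simp add: G_def)
  have "\<rho> / (2 * (L + 2 * \<rho>)\<^sup>2) > 0" using assms(6) L by simp
  then have fixpoint: "prox_sol F Z (2 * \<rho>) w \<in> Z" "P (prox_sol F Z (2 * \<rho>) w) = prox_sol F Z (2 * \<rho>) w"
    using svi svi_sol_iff_proj_grad_fixpoint[OF assms(1,2)] by (auto simp: P_def)
  have PZ: "P ` Z \<subseteq> Z"
    using closest_point_in_set[OF assms(2) Z] by (auto simp: P_def proj_grad_step_def)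
  have "(sqrt (1 - 3 * \<rho>\<^sup>2 / (4 * (L + 2 * \<rho>)\<^sup>2)))-lipschitz_on Z P"
    unfolding P_def using proj_grad_step_contraction[OF assms(1,2) Z mono lip] assms(6) L by simp
  from funpow_dist_fixpoint_le[OF this PZ fixpoint assms(3)] show ?thesis
    using assms(6)
    by (simp add: pg_iter_eq_funpow P_def G_def)
qed

lemma svi_prox_dist_mvi_sol_le:
  assumes "svi_sol (\<lambda>z. F z + \<sigma> *\<^sub>R (z - w)) Z zb" "mvi_sol F Z p" "\<sigma> > 0"
  shows "(norm (zb - p))\<^sup>2 \<le> (norm (w - p))\<^sup>2 - (norm (w - zb))\<^sup>2"
proof -
  have "0 \<le> inner (F zb + \<sigma> *\<^sub>R (zb - w)) (p - zb)" "0 \<le> inner (F zb) (zb - p)"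
    using assms(1,2) by (auto simp: svi_sol_def mvi_sol_def)
  then have "0 \<le> \<sigma> * inner (w - zb) (zb - p)"
    by (simp add: inner_add_left inner_diff_left inner_diff_right inner_commute algebra_simps)
  then have "0 \<le> inner (w - zb) (zb - p)"
    using assms(3) by (simp add: zero_le_mult_iff)
  moreover have "inner (w - zb) (zb - p) = ((norm (w - p))\<^sup>2 - (norm (w - zb))\<^sup>2 - (norm (zb - p))\<^sup>2) / 2"
    using dot_norm[of "w - zb" "zb - p"] by simp
  ultimately show ?thesis by (simp add: field_simps)
qed

lemma inexact_prox_step_le:
  fixes w zb z' p :: "'a::real_normed_vector"
  assumes "(norm (zb - p))\<^sup>2 \<le> (norm (w - p))\<^sup>2 - (norm (w - zb))\<^sup>2"
    and "norm (z' - zb) \<le> e * D" "norm (zb - p) \<le> D" "0 \<le> e" "e \<le> 1"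
  shows "(norm (w - zb))\<^sup>2 \<le> (norm (w - p))\<^sup>2 - (norm (z' - p))\<^sup>2 + 3 * D\<^sup>2 * e"
proof -
  have D: "0 \<le> D" using assms(3) norm_ge_zero order_trans by blast
  have "norm (z' - p) \<le> norm (zb - p) + e * D"
    using norm_triangle_ineq[of "z' - zb" "zb - p"] assms(2) by simp
  then have "(norm (z' - p))\<^sup>2 \<le> (norm (zb - p) + e * D)\<^sup>2"
    by (simp add: power_mono)
  also have "\<dots> = (norm (zb - p))\<^sup>2 + 2 * e * (norm (zb - p) * D) + e * (e * D\<^sup>2)"
    by (simp add: power2_eq_square algebra_simps)
  also have "\<dots> \<le> (norm (zb - p))\<^sup>2 + 2 * e * D\<^sup>2 + e * D\<^sup>2"
    using assms(3-5) D
    by (intro add_mono mult_left_mono) (auto simp: power2_eq_square mult_right_mono mult_left_le_one_le)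
  finally show ?thesis using assms(1) by (simp add: algebra_simps)
qed

lemma sqrt_one_minus_power_le:
  fixes x :: real
  assumes "0 < x" "x < 1" "2 / x * ln (real k + 1) \<le> real t"
  shows "sqrt (1 - x) ^ t \<le> 1 / (real k + 1)"
proof -
  have "sqrt (1 - x) ^ t = sqrt ((1 - x) ^ t)" by (simp add: real_sqrt_power)
  also have "\<dots> \<le> sqrt (exp (- x) ^ t)"
    using exp_ge_add_one_self[of "- x"] assms(2) by (simp add: power_mono)
  also have "\<dots> = sqrt ((exp (- (x * real t / 2)))\<^sup>2)"
    by (simp add: exp_of_nat_mult[symmetric] exp_add[symmetric] power2_eq_square mult.commute)
  also have "\<dots> = exp (- (x * real t / 2))"
    by simp
  also have "\<dots> \<le> exp (- ln (real k + 1))"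
    using assms(1,3) by (simp add: field_simps)
  finally show ?thesis by (simp add: exp_minus divide_inverse)
qed

lemma inner_iterations_ge:
  fixes \<rho> l :: real
  assumes "0 < \<rho>" "\<rho> \<le> l"
  shows "8 * l\<^sup>2 / (3 * \<rho>\<^sup>2) * ln (real k + 1)
    \<le> real (nat \<lceil>1 + 4 * l\<^sup>2 / \<rho>\<^sup>2 * ln (8 * l\<^sup>2 * real (k + 1) / \<rho>\<^sup>2)\<rceil>)"
proof -
  have "\<rho>\<^sup>2 \<le> 8 * l\<^sup>2"
    using power_mono[OF assms(2), of 2] assms(1) zero_le_power2[of l] by linarith
  then have "(real k + 1) * \<rho>\<^sup>2 \<le> (real k + 1) * (8 * l\<^sup>2)"
    by (rule mult_left_mono) simp
  then have "real k + 1 \<le> 8 * l\<^sup>2 * real (k + 1) / \<rho>\<^sup>2"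
    using assms(1) by (simp add: pos_le_divide_eq ac_simps)
  then have "ln (real k + 1) \<le> ln (8 * l\<^sup>2 * real (k + 1) / \<rho>\<^sup>2)" by simp
  moreover have "0 \<le> ln (real k + 1)" by simp
  ultimately have "8 * l\<^sup>2 / (3 * \<rho>\<^sup>2) * ln (real k + 1) \<le> 4 * l\<^sup>2 / \<rho>\<^sup>2 * ln (8 * l\<^sup>2 * real (k + 1) / \<rho>\<^sup>2)"
    using assms(1)
    by (intro mult_mono) (auto simp: field_simps)
  then show ?thesis by linarith
qed

lemma contraction_factor_power_le:
  fixes \<rho> L :: real
  assumes "0 < \<rho>" "0 \<le> L" "8 * (L + 2 * \<rho>)\<^sup>2 / (3 * \<rho>\<^sup>2) * ln (real k + 1) \<le> real t"
  shows "sqrt (1 - 3 * \<rho>\<^sup>2 / (4 * (L + 2 * \<rho>)\<^sup>2)) ^ t \<le> 1 / (real k + 1)"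
proof (rule sqrt_one_minus_power_le)
  have "3 * \<rho>\<^sup>2 < 4 * (L + 2 * \<rho>)\<^sup>2"
    using power_strict_mono[of \<rho> "L + 2 * \<rho>" 2] assms(1,2) zero_le_power2[of \<rho>] by linarith
  moreover have "0 < 4 * (L + 2 * \<rho>)\<^sup>2" using assms(1,2) by simp
  ultimately show "0 < 3 * \<rho>\<^sup>2 / (4 * (L + 2 * \<rho>)\<^sup>2)" "3 * \<rho>\<^sup>2 / (4 * (L + 2 * \<rho>)\<^sup>2) < 1"
    using assms(1) by simp_all
  show "2 / (3 * \<rho>\<^sup>2 / (4 * (L + 2 * \<rho>)\<^sup>2)) * ln (real k + 1) \<le> real t"
    using assms(3) by (simp add: field_simps)
qed

lemma ippm_stage_descent:
  fixes F :: "'a::{real_inner,heine_borel} \<Rightarrow> 'a"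
  assumes "convex Z" "closed Z" "z0 \<in> Z" "\<forall>z\<in>Z. \<forall>z'\<in>Z. norm (z - z') \<le> D"
    and "weakly_monotone_on \<rho> Z F" "L-lipschitz_on Z F" "0 < \<rho>" "mvi_sol F Z p"
    and "\<And>k. 8 * (L + 2 * \<rho>)\<^sup>2 / (3 * \<rho>\<^sup>2) * ln (real k + 1) \<le> real (T k)"
  defines "zs \<equiv> ippm F Z (1 / (2 * \<rho>)) (\<lambda>_. \<rho> / (2 * (L + 2 * \<rho>)\<^sup>2)) T z0"
  shows "(norm (zs k - prox_sol F Z (2 * \<rho>) (zs k)))\<^sup>2
    \<le> (norm (zs k - p))\<^sup>2 - (norm (zs (Suc k) - p))\<^sup>2 + 3 * D\<^sup>2 / (real k + 1)"
proof -
  define zb where "zb = prox_sol F Z (2 * \<rho>) (zs k)"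
  have Z: "Z \<noteq> {}" using assms(3) by blast
  have L: "0 \<le> L" using lipschitz_on_nonneg[OF assms(6)] .
  have zsZ: "zs k \<in> Z" unfolding zs_def using ippm_in[OF assms(2) Z assms(3)] .
  have svi: "svi_sol (\<lambda>z. F z + (2 * \<rho>) *\<^sub>R (z - zs k)) Z zb"
    unfolding zb_def using svi_prox_sol[OF assms(1,2) Z assms(5,6)] assms(7) by simp
  then have zbZ: "zb \<in> Z" by (simp add: svi_sol_def)
  have "norm (zs (Suc k) - zb) \<le> sqrt (1 - 3 * \<rho>\<^sup>2 / (4 * (L + 2 * \<rho>)\<^sup>2)) ^ T k * norm (zs k - zb)"
    using pg_iter_dist_prox_sol[OF assms(1,2) zsZ assms(5-7), of "T k"]
    by (simp add: zs_def zb_def dist_norm)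
  also have "\<dots> \<le> 1 / (real k + 1) * D"
    using contraction_factor_power_le[OF assms(7) L assms(9)] assms(4) zsZ zbZ
    by (intro mult_mono) auto
  finally have "norm (zs (Suc k) - zb) \<le> 1 / (real k + 1) * D" .
  moreover have "norm (zb - p) \<le> D"
    using assms(4,8) zbZ by (simp add: mvi_sol_def)
  ultimately have "(norm (zs k - zb))\<^sup>2
      \<le> (norm (zs k - p))\<^sup>2 - (norm (zs (Suc k) - p))\<^sup>2 + 3 * D\<^sup>2 * (1 / (real k + 1))"
    using svi_prox_dist_mvi_sol_le[OF svi assms(8)] assms(7) by (intro inexact_prox_step_le) auto
  then show ?thesis by (simp add: zb_def)
qed

section \<open>Weighted averages\<close>

lemma weighted_telescope_le:
  fixes \<theta> a :: "nat \<Rightarrow> real"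
  assumes "\<And>k. \<theta> k \<le> \<theta> (Suc k)" "\<And>k. 0 \<le> \<theta> k" "\<And>k. 0 \<le> a k" "\<And>k. a k \<le> B"
  shows "(\<Sum>k\<le>n. \<theta> k * (a k - a (Suc k))) \<le> \<theta> n * B"
proof -
  have "(\<Sum>k\<le>n. \<theta> k * (a k - a (Suc k))) + \<theta> n * a (Suc n) \<le> \<theta> n * B"
  proof (induction n)
    case 0
    show ?case using mult_left_mono[OF assms(4)[of 0] assms(2)[of 0]] by (simp add: algebra_simps)
  next
    case (Suc n)
    have "(\<Sum>k\<le>Suc n. \<theta> k * (a k - a (Suc k))) + \<theta> (Suc n) * a (Suc (Suc n))
        = (\<Sum>k\<le>n. \<theta> k * (a k - a (Suc k))) + \<theta> n * a (Suc n) + (\<theta> (Suc n) - \<theta> n) * a (Suc n)"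
      by (simp add: algebra_simps)
    also have "\<dots> \<le> \<theta> n * B + (\<theta> (Suc n) - \<theta> n) * B"
      using Suc assms(1,4) by (intro add_mono mult_left_mono) auto
    finally show ?case by (simp add: algebra_simps)
  qed
  then show ?thesis using mult_nonneg_nonneg[OF assms(2,3), of n "Suc n"] by linarith
qed

lemma powr_Suc_diff_le:
  fixes \<alpha> :: real
  assumes "0 \<le> \<alpha>"
  shows "real (Suc n) powr (\<alpha> + 1) - real n powr (\<alpha> + 1) \<le> (\<alpha> + 1) * real (Suc n) powr \<alpha>"
proof (cases "n = 0")
  case False
  have "\<exists>z. real n < z \<and> z < real (Suc n) \<and>
      real (Suc n) powr (\<alpha> + 1) - real n powr (\<alpha> + 1) = (real (Suc n) - real n) * ((\<alpha> + 1) * z powr \<alpha>)"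
  proof (rule MVT2)
    fix x assume "real n \<le> x"
    then have "0 < x" using False by linarith
    then show "((\<lambda>x. x powr (\<alpha> + 1)) has_real_derivative (\<alpha> + 1) * x powr \<alpha>) (at x)"
      using has_real_derivative_powr[of x "\<alpha> + 1"] by simp
  qed simp
  then obtain z where z: "real n < z" "z < real (Suc n)"
    "real (Suc n) powr (\<alpha> + 1) - real n powr (\<alpha> + 1) = (\<alpha> + 1) * z powr \<alpha>"
    by auto
  have "z powr \<alpha> \<le> real (Suc n) powr \<alpha>" using z assms by (intro powr_mono2) auto
  then show ?thesis using z(3) assms by (simp add: mult_left_mono)
qed (use assms in simp)

lemma sum_Suc_powr_ge:
  fixes \<alpha> :: real
  assumes "0 \<le> \<alpha>"
  shows "real n powr (\<alpha> + 1) / (\<alpha> + 1) \<le> (\<Sum>k<n. real (k + 1) powr \<alpha>)"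
proof (induction n)
  case (Suc n)
  have "real (Suc n) powr (\<alpha> + 1) / (\<alpha> + 1)
      \<le> (real n powr (\<alpha> + 1) + (\<alpha> + 1) * real (Suc n) powr \<alpha>) / (\<alpha> + 1)"
    using powr_Suc_diff_le[OF assms, of n] assms by (intro divide_right_mono) auto
  also have "\<dots> = real n powr (\<alpha> + 1) / (\<alpha> + 1) + real (Suc n) powr \<alpha>"
    using assms by (simp add: add_divide_distrib)
  also have "\<dots> \<le> (\<Sum>k<Suc n. real (k + 1) powr \<alpha>)" using Suc by simp
  finally show ?case .
qed simp

lemma weighted_descent_sum_le:
  fixes a d :: "nat \<Rightarrow> real"
  assumes "1 \<le> \<alpha>" "\<And>k. 0 \<le> a k" "\<And>k. a k \<le> B" "0 \<le> C"
    and "\<And>k. d k \<le> a k - a (Suc k) + C / (real k + 1)"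
  shows "(\<Sum>k<n. real (k + 1) powr \<alpha> * d k) \<le> (B + C) * real n powr \<alpha>"
proof (cases n)
  case (Suc m)
  have "(\<Sum>k<n. real (k + 1) powr \<alpha> * d k)
      \<le> (\<Sum>k<n. real (k + 1) powr \<alpha> * (a k - a (Suc k)) + C * real (k + 1) powr (\<alpha> - 1))"
  proof (intro sum_mono)
    fix k
    have "real (k + 1) powr \<alpha> * d k \<le> real (k + 1) powr \<alpha> * (a k - a (Suc k) + C / (real k + 1))"
      using assms(5) by (intro mult_left_mono) auto
    moreover have "real (k + 1) powr \<alpha> * (C / (real k + 1)) = C * real (k + 1) powr (\<alpha> - 1)"
      by (simp add: powr_diff add.commute)
    ultimately show "real (k + 1) powr \<alpha> * d k \<le> real (k + 1) powr \<alpha> * (a k - a (Suc k)) + C * real (k + 1) powr (\<alpha> - 1)"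
      by (simp add: distrib_left)
  qed
  also have "\<dots> = (\<Sum>k\<le>m. real (k + 1) powr \<alpha> * (a k - a (Suc k))) + C * (\<Sum>k<n. real (k + 1) powr (\<alpha> - 1))"
    by (simp add: Suc sum.distrib sum_distrib_left lessThan_Suc_atMost)
  also have "\<dots> \<le> real n powr \<alpha> * B + C * (\<Sum>k<n. real n powr (\<alpha> - 1))"
  proof (intro add_mono mult_left_mono sum_mono)
    show "(\<Sum>k\<le>m. real (k + 1) powr \<alpha> * (a k - a (Suc k))) \<le> real n powr \<alpha> * B"
      using weighted_telescope_le[of "\<lambda>k. real (k + 1) powr \<alpha>" a B m] assms(1-3)
      by (simp add: Suc powr_mono2)
  qed (use assms(1,4) in \<open>auto intro: powr_mono2\<close>)
  also have "(\<Sum>k<n. real n powr (\<alpha> - 1)) = real n powr \<alpha>"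
    using Suc by (simp add: powr_diff)
  finally show ?thesis by (simp add: algebra_simps)
qed simp

lemma weighted_average_le:
  fixes a d :: "nat \<Rightarrow> real"
  assumes "1 \<le> \<alpha>" "\<And>k. 0 \<le> a k" "\<And>k. a k \<le> B" "0 \<le> C"
    and "\<And>k. d k \<le> a k - a (Suc k) + C / (real k + 1)"
  shows "(\<Sum>k<n. real (k + 1) powr \<alpha> * d k) / (\<Sum>k<n. real (k + 1) powr \<alpha>) \<le> (B + C) * (\<alpha> + 1) / real n"
proof (cases "n = 0")
  case False
  define S where "S = (\<Sum>k<n. real (k + 1) powr \<alpha>)"
  define M where "M = real n * real n powr \<alpha> / (\<alpha> + 1)"
  have "0 \<le> B + C" using assms(2,3)[of 0] assms(4) by linarith
  have "0 < M" using False assms(1) by (simp add: M_def)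
  moreover have "M \<le> S"
    using sum_Suc_powr_ge[of \<alpha> n] assms(1) False by (simp add: M_def S_def powr_add mult.commute)
  ultimately have "(\<Sum>k<n. real (k + 1) powr \<alpha> * d k) / S \<le> (B + C) * real n powr \<alpha> / S"
    using weighted_descent_sum_le[OF assms] by (intro divide_right_mono) auto
  also have "\<dots> \<le> (B + C) * real n powr \<alpha> / M"
    using \<open>0 < M\<close> \<open>M \<le> S\<close> \<open>0 \<le> B + C\<close> by (intro divide_left_mono) auto
  also have "\<dots> = (B + C) * (\<alpha> + 1) / real n"
    using False assms(1) by (simp add: M_def)
  finally show ?thesis by (simp add: S_def)
qed simp

lemma ippm_weighted_average_le:
  fixes F :: "'a::{real_inner,heine_borel} \<Rightarrow> 'a"
  assumes "convex Z" "closed Z" "z0 \<in> Z" "\<forall>z\<in>Z. \<forall>z'\<in>Z. norm (z - z') \<le> D"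
    and "weakly_monotone_on \<rho> Z F" "L-lipschitz_on Z F" "0 < \<rho>" "\<exists>p. mvi_sol F Z p" "1 \<le> \<alpha>"
    and "\<And>k. 8 * (L + 2 * \<rho>)\<^sup>2 / (3 * \<rho>\<^sup>2) * ln (real k + 1) \<le> real (T k)"
  defines "zs \<equiv> ippm F Z (1 / (2 * \<rho>)) (\<lambda>_. \<rho> / (2 * (L + 2 * \<rho>)\<^sup>2)) T z0"
  shows "(\<Sum>k<n. real (k + 1) powr \<alpha> * (norm (zs k - prox_sol F Z (2 * \<rho>) (zs k)))\<^sup>2)
      / (\<Sum>k<n. real (k + 1) powr \<alpha>) \<le> 4 * D\<^sup>2 * (\<alpha> + 1) / real n"
proof -
  obtain p where p: "mvi_sol F Z p" using assms(8) by blast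
  have "(norm (zs k - p))\<^sup>2 \<le> D\<^sup>2" for k
    using ippm_in[OF assms(2) _ assms(3)] p assms(4) unfolding zs_def mvi_sol_def
    by (metis empty_iff norm_ge_zero power_mono)
  from weighted_average_le[OF assms(9) zero_le_power2 this _
      ippm_stage_descent[OF assms(1-7) p assms(10), folded zs_def]]
  show ?thesis by simp
qed

lemma div_nat_ceiling_div_le:
  fixes x c :: real
  assumes "0 < c" "0 \<le> x"
  shows "x / real (nat \<lceil>x / c\<rceil>) \<le> c"
proof (cases "x = 0")
  case False
  define K where "K = real (nat \<lceil>x / c\<rceil>)"
  have "0 < x / c" "x / c \<le> K" using False assms by (auto simp: K_def)
  then have "0 < K" "x \<le> K * c" using assms(1) by (linarith, simp add: pos_divide_le_eq)
  then show ?thesis by (simp add: K_def [symmetric] pos_divide_le_eq mult.commute)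
qed (use assms in simp)

lemma weighted_average_scale_le:
  fixes \<theta> g d :: "nat \<Rightarrow> real"
  assumes "\<And>k. 0 \<le> \<theta> k" "\<And>k. g k \<le> c * d k"
  shows "(\<Sum>k<n. \<theta> k * g k) / (\<Sum>k<n. \<theta> k) \<le> c * ((\<Sum>k<n. \<theta> k * d k) / (\<Sum>k<n. \<theta> k))"
proof -
  have "(\<Sum>k<n. \<theta> k * g k) \<le> c * (\<Sum>k<n. \<theta> k * d k)"
    unfolding sum_distrib_left
  proof (intro sum_mono)
    fix k
    show "\<theta> k * g k \<le> c * (\<theta> k * d k)"
      using mult_left_mono[OF assms(2) assms(1)] by (simp add: mult.left_commute)
  qed
  then show ?thesis
    using assms(1) by (simp add: divide_right_mono sum_nonneg)
qed

section \<open>Stationarity of the proximal points\<close>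

lemma frechet_subdiff_on_if_inner_le:
  assumes "\<zeta> \<in> frechet_subdiff h x" "x \<in> S" "\<And>x'. x' \<in> S \<Longrightarrow> inner \<xi> (x' - x) \<le> inner \<zeta> (x' - x)"
  shows "\<xi> \<in> frechet_subdiff_on S h x"
  unfolding frechet_subdiff_on_def
proof (intro CollectI conjI assms(2) allI impI)
  fix e :: real assume "e > 0"
  then obtain d where "d > 0"
    and d: "\<And>x'. norm (x' - x) < d \<Longrightarrow> h x + inner \<zeta> (x' - x) - e * norm (x' - x) \<le> h x'"
    using assms(1) unfolding frechet_subdiff_def frechet_subdiff_on_def by blast
  have "h x + inner \<xi> (x' - x) - e * norm (x' - x) \<le> h x'" if "x' \<in> S" "norm (x' - x) < d" for x'
    using d[OF that(2)] assms(3)[OF that(1)] by linarith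
  with \<open>d > 0\<close> show "\<exists>d>0. \<forall>x'\<in>S. norm (x' - x) < d \<longrightarrow> h x + inner \<xi> (x' - x) - e * norm (x' - x) \<le> h x'"
    by blast
qed

lemma neg_mem_subdiff_plus_ind:
  assumes "zb \<in> X \<times> Y"
    and "g \<in> frechet_subdiff (\<lambda>x. f x (snd zb)) (fst zb) \<times> frechet_subdiff (\<lambda>y. - f (fst zb) y) (snd zb)"
    and "\<forall>z\<in>X \<times> Y. 0 \<le> inner (g + v) (z - zb)"
  shows "- v \<in> subdiff_plus_ind X Y f zb"
proof -
  obtain u w where zb: "zb = (u, w)" by force
  obtain gx gy where g: "g = (gx, gy)" by force
  obtain vx vy where v: "v = (vx, vy)" by force
  have "- vx \<in> frechet_subdiff_on X (\<lambda>x. f x w) u"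
  proof (rule frechet_subdiff_on_if_inner_le)
    fix x' assume "x' \<in> X"
    then show "inner (- vx) (x' - u) \<le> inner gx (x' - u)"
      using assms(1,3) bspec[OF assms(3), of "(x', w)"]
      by (simp add: zb g v inner_Pair inner_add_left)
  qed (use assms(1,2) zb g in auto)
  moreover have "- vy \<in> frechet_subdiff_on Y (\<lambda>y. - f u y) w"
  proof (rule frechet_subdiff_on_if_inner_le)
    fix y' assume "y' \<in> Y"
    then show "inner (- vy) (y' - w) \<le> inner gy (y' - w)"
      using assms(1,3) bspec[OF assms(3), of "(u, y')"]
      by (simp add: zb g v inner_Pair inner_add_left)
  qed (use assms(1,2) zb g in auto)
  ultimately show ?thesis by (simp add: subdiff_plus_ind_def zb v)
qed

lemma infdist_subdiff_plus_ind_le: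
  assumes "svi_sol (\<lambda>z. F z + \<sigma> *\<^sub>R (z - w)) (X \<times> Y) zb" "0 \<le> \<sigma>"
    and "F zb \<in> frechet_subdiff (\<lambda>x. f x (snd zb)) (fst zb) \<times> frechet_subdiff (\<lambda>y. - f (fst zb) y) (snd zb)"
  shows "infdist 0 (subdiff_plus_ind X Y f zb) \<le> \<sigma> * norm (w - zb)"
proof -
  have "- (\<sigma> *\<^sub>R (zb - w)) \<in> subdiff_plus_ind X Y f zb"
    using assms(1,3) by (intro neg_mem_subdiff_plus_ind) (auto simp: svi_sol_def)
  then have "infdist 0 (subdiff_plus_ind X Y f zb) \<le> norm (\<sigma> *\<^sub>R (zb - w))"
    by (metis infdist_le dist_0_norm norm_minus_cancel)
  then show ?thesis using assms(2) by (simp add: norm_minus_commute)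
qed

lemma infdist_subdiff_plus_ind_prox_sol_le:
  fixes X :: "'a::euclidean_space set" and Y :: "'b::euclidean_space set"
  assumes "convex (X \<times> Y)" "closed (X \<times> Y)" "X \<times> Y \<noteq> {}"
    and "weakly_monotone_on \<rho> (X \<times> Y) F" "L-lipschitz_on (X \<times> Y) F" "0 \<le> \<rho>" "\<rho> < \<sigma>"
    and "\<forall>z\<in>X \<times> Y. F z \<in> frechet_subdiff (\<lambda>x. f x (snd z)) (fst z) \<times> frechet_subdiff (\<lambda>y. - f (fst z) y) (snd z)"
  shows "infdist 0 (subdiff_plus_ind X Y f (prox_sol F (X \<times> Y) \<sigma> w)) \<le> \<sigma> * norm (w - prox_sol F (X \<times> Y) \<sigma> w)"
proof -
  have svi: "svi_sol (\<lambda>z. F z + \<sigma> *\<^sub>R (z - w)) (X \<times> Y) (prox_sol F (X \<times> Y) \<sigma> w)"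
    using svi_prox_sol[OF assms(1-7)] .
  then have "prox_sol F (X \<times> Y) \<sigma> w \<in> X \<times> Y" by (simp add: svi_sol_def)
  with svi show ?thesis
    using assms(6,7,8) by (intro infdist_subdiff_plus_ind_le) auto
qed

section \<open>Iteration complexity\<close>

lemma nat_ceiling_log_le:
  fixes c b :: real
  assumes "0 \<le> c" "0 < b" "k < K"
  shows "real (nat \<lceil>1 + c * ln (b * real (k + 1))\<rceil>) \<le> 2 + c * (\<bar>ln b\<bar> + ln (real K))"
proof -
  have "ln (real (k + 1)) \<le> ln (real K)" using assms(3) by simp
  then have "ln (b * real (k + 1)) \<le> \<bar>ln b\<bar> + ln (real K)"
    using assms(2) by (simp add: ln_mult)
  moreover have "0 \<le> \<bar>ln b\<bar> + ln (real K)" using assms(3) by simp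
  ultimately have "c * ln (b * real (k + 1)) \<le> c * (\<bar>ln b\<bar> + ln (real K))"
    "0 \<le> c * (\<bar>ln b\<bar> + ln (real K))"
    using assms(1) by (auto intro: mult_left_mono)
  then show ?thesis by linarith
qed

lemma sum_log_iterations_bigo:
  fixes c b A :: real
  assumes "0 \<le> c" "0 < b" "0 \<le> A"
  shows "(\<lambda>e. real (\<Sum>k<nat \<lceil>A / e\<^sup>2\<rceil>. nat \<lceil>1 + c * ln (b * real (k + 1))\<rceil>))
    \<in> O[at_right 0](\<lambda>e. ln (1 / e) / e\<^sup>2)"
proof (rule bigoI)
  define M where "M = 2 + c * (\<bar>ln b\<bar> + ln (A + 1) + 2)"
  have "0 \<le> M" using assms by (simp add: M_def)
  show "\<forall>\<^sub>F e in at_right 0. norm (real (\<Sum>k<nat \<lceil>A / e\<^sup>2\<rceil>. nat \<lceil>1 + c * ln (b * real (k + 1))\<rceil>))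
      \<le> ((A + 1) * M) * norm (ln (1 / e) / e\<^sup>2)"
  proof (rule eventually_at_rightI)
    fix e :: real assume "e \<in> {0<..<exp (- 1)}"
    then have "0 < e" "e < exp (- 1)" by auto
    moreover have "exp (- 1) < (1::real)" by simp
    ultimately have e: "0 < e" "e < 1" "1 \<le> ln (1 / e)"
      using ln_less_cancel_iff[of e "exp (- 1)"] by (linarith, linarith, simp add: ln_div)
    define K where "K = nat \<lceil>A / e\<^sup>2\<rceil>"
    have "real K \<le> A / e\<^sup>2 + 1" using assms(3) by (simp add: K_def)
    also have "\<dots> \<le> (A + 1) / e\<^sup>2"
      using e by (simp add: add_divide_distrib power_le_one)
    finally have K: "real K \<le> (A + 1) / e\<^sup>2" .
    have "real (nat \<lceil>1 + c * ln (b * real (k + 1))\<rceil>) \<le> M * ln (1 / e)" if "k < K" for k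
    proof -
      have "ln (real K) \<le> ln ((A + 1) / e\<^sup>2)" using K that by simp
      also have "\<dots> = ln (A + 1) + 2 * ln (1 / e)"
        using assms(3) e by (simp add: ln_div ln_mult ln_realpow)
      finally have "2 + c * (\<bar>ln b\<bar> + ln (real K)) \<le> 2 + c * (\<bar>ln b\<bar> + ln (A + 1) + 2 * ln (1 / e))"
        using assms(1) by (simp add: mult_left_mono)
      also have "\<dots> \<le> M * ln (1 / e)"
      proof -
        have "0 \<le> 2 + c * (\<bar>ln b\<bar> + ln (A + 1))" using assms by simp
        then have "2 + c * (\<bar>ln b\<bar> + ln (A + 1)) \<le> (2 + c * (\<bar>ln b\<bar> + ln (A + 1))) * ln (1 / e)"
          using e(3) by (simp add: mult_le_cancel_left1)
        moreover have "M * ln (1 / e) = (2 + c * (\<bar>ln b\<bar> + ln (A + 1))) * ln (1 / e) + 2 * c * ln (1 / e)"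
          by (simp add: M_def algebra_simps)
        ultimately show ?thesis by (simp add: algebra_simps)
      qed
      finally show ?thesis using nat_ceiling_log_le[OF assms(1,2) that] by linarith
    qed
    then have "(\<Sum>k<K. real (nat \<lceil>1 + c * ln (b * real (k + 1))\<rceil>)) \<le> (\<Sum>k<K. M * ln (1 / e))"
      by (intro sum_mono) simp
    then have "real (\<Sum>k<K. nat \<lceil>1 + c * ln (b * real (k + 1))\<rceil>) \<le> real K * (M * ln (1 / e))"
      by simp
    also have "\<dots> \<le> (A + 1) / e\<^sup>2 * (M * ln (1 / e))"
      using K \<open>0 \<le> M\<close> e by (intro mult_right_mono) auto
    finally show "norm (real (\<Sum>k<nat \<lceil>A / e\<^sup>2\<rceil>. nat \<lceil>1 + c * ln (b * real (k + 1))\<rceil>))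
      \<le> ((A + 1) * M) * norm (ln (1 / e) / e\<^sup>2)"
      using e by (simp add: K_def sum_nonneg mult.assoc)
  qed simp
qed

lemma total_inner_iterations_bigo:
  fixes \<rho> L A :: real
  assumes "0 < \<rho>" "0 < L" "0 \<le> A"
  shows "(\<lambda>e. real (\<Sum>k<nat \<lceil>A / e\<^sup>2\<rceil>.
      nat \<lceil>1 + 4 * (L + 2 * \<rho>)\<^sup>2 / \<rho>\<^sup>2 * ln (8 * (L + 2 * \<rho>)\<^sup>2 * real (k + 1) / \<rho>\<^sup>2)\<rceil>))
    \<in> O[at_right 0](\<lambda>e. ln (1 / e) * L\<^sup>2 / e\<^sup>2)"
proof -
  have "(\<lambda>e. ln (1 / e) * L\<^sup>2 / e\<^sup>2) = (\<lambda>e. L\<^sup>2 * (ln (1 / e) / e\<^sup>2))"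
    by (simp add: field_simps)
  moreover have "O[at_right 0](\<lambda>e. L\<^sup>2 * (ln (1 / e) / e\<^sup>2)) = O[at_right 0](\<lambda>e. ln (1 / e) / e\<^sup>2)"
    using assms(2) by (intro landau_o.big.cmult) simp
  moreover have "(\<lambda>e. real (\<Sum>k<nat \<lceil>A / e\<^sup>2\<rceil>.
      nat \<lceil>1 + 4 * (L + 2 * \<rho>)\<^sup>2 / \<rho>\<^sup>2 * ln (8 * (L + 2 * \<rho>)\<^sup>2 * real (k + 1) / \<rho>\<^sup>2)\<rceil>))
    \<in> O[at_right 0](\<lambda>e. ln (1 / e) / e\<^sup>2)"
    using sum_log_iterations_bigo[of "4 * (L + 2 * \<rho>)\<^sup>2 / \<rho>\<^sup>2" "8 * (L + 2 * \<rho>)\<^sup>2 / \<rho>\<^sup>2" A] assms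
    by simp
  ultimately show ?thesis by (simp only:)
qed

theorem corollary12:
  fixes X :: "'a::euclidean_space set" and Y :: "'b::euclidean_space set"
    and f :: "'a \<Rightarrow> 'b \<Rightarrow> real" and F :: "'a \<times> 'b \<Rightarrow> 'a \<times> 'b"
    and \<rho> L D \<alpha> \<epsilon> :: real and z0 :: "'a \<times> 'b"
  assumes "closed X" "convex X" "closed Y" "convex Y" "compact (X \<times> Y)"
    and "\<forall>z\<in>X \<times> Y. \<forall>z'\<in>X \<times> Y. norm (z - z') \<le> D"
    and "continuous_on (X \<times> Y) (\<lambda>z. f (fst z) (snd z))"
    and "\<rho> > 0"
    and "\<forall>z\<in>X \<times> Y. frechet_subdiff (\<lambda>x. f x (snd z)) (fst z) \<times>
                     frechet_subdiff (\<lambda>y. - f (fst z) y) (snd z) = {F z}"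
    and "weakly_monotone_on \<rho> (X \<times> Y) F"
    and "L-lipschitz_on (X \<times> Y) F"
    and "\<exists>z. mvi_sol F (X \<times> Y) z"
    and "\<alpha> \<ge> 1" and "\<epsilon> > 0" and "z0 \<in> X \<times> Y"
  defines "\<gamma> \<equiv> 1 / (2 * \<rho>)"
    and "T \<equiv> \<lambda>k::nat. nat \<lceil>1 + 4 * (L + 2 * \<rho>)\<^sup>2 / \<rho>\<^sup>2 * ln (8 * (L + 2 * \<rho>)\<^sup>2 * real (k + 1) / \<rho>\<^sup>2)\<rceil>"
    and "K \<equiv> \<lambda>e::real. nat \<lceil>16 * \<rho>\<^sup>2 * D\<^sup>2 * (\<alpha> + 1) / e\<^sup>2\<rceil>"
    and "\<theta> \<equiv> \<lambda>k::nat. real (k + 1) powr \<alpha>"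
    and "zs \<equiv> ippm F (X \<times> Y) (1 / (2 * \<rho>)) (\<lambda>_. \<rho> / (2 * (L + 2 * \<rho>)\<^sup>2))
                 (\<lambda>k::nat. nat \<lceil>1 + 4 * (L + 2 * \<rho>)\<^sup>2 / \<rho>\<^sup>2 * ln (8 * (L + 2 * \<rho>)\<^sup>2 * real (k + 1) / \<rho>\<^sup>2)\<rceil>) z0"
    and "zbar \<equiv> \<lambda>w. THE z. svi_sol (\<lambda>z. F z + (2 * \<rho>) *\<^sub>R (z - w)) (X \<times> Y) z"
  shows "(\<Sum>k<K \<epsilon>. \<theta> k * (norm (zs k - zbar (zs k)))\<^sup>2) / (\<Sum>k<K \<epsilon>. \<theta> k) \<le> \<gamma>\<^sup>2 * \<epsilon>\<^sup>2 \<and>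
         (\<Sum>k<K \<epsilon>. \<theta> k * (infdist 0 (subdiff_plus_ind X Y f (zbar (zs k))))\<^sup>2) / (\<Sum>k<K \<epsilon>. \<theta> k) \<le> \<epsilon>\<^sup>2 \<and>
         (L > 0 \<longrightarrow> (\<lambda>e. real (\<Sum>k<K e. T k)) \<in> O[at_right 0](\<lambda>e. ln (1 / e) * L\<^sup>2 / e\<^sup>2))"
proof -
  note gamma_def = assms(16) and T_def = assms(17) and K_def = assms(18) and theta_def = assms(19)
    and zs_def = assms(20) and zbar_def = assms(21)
  have Z: "convex (X \<times> Y)" "closed (X \<times> Y)" "X \<times> Y \<noteq> {}"
    using assms(1-4,15) by (auto simp: convex_Times closed_Times)
  have L: "0 \<le> L" using assms(11) by (rule lipschitz_on_nonneg)
  have zbar: "zbar = prox_sol F (X \<times> Y) (2 * \<rho>)" by (simp add: zbar_def prox_sol_def[abs_def])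
  define d where "d k = (norm (zs k - zbar (zs k)))\<^sup>2" for k
  have "(\<Sum>k<K \<epsilon>. \<theta> k * d k) / (\<Sum>k<K \<epsilon>. \<theta> k) \<le> 4 * D\<^sup>2 * (\<alpha> + 1) / real (K \<epsilon>)"
    unfolding d_def theta_def zbar zs_def
    using ippm_weighted_average_le[OF Z(1,2) assms(15,6,10,11,8,12,13) inner_iterations_ge] assms(8) L
    by simp
  also have "\<dots> \<le> \<gamma>\<^sup>2 * \<epsilon>\<^sup>2"
  proof -
    have "0 < \<gamma>\<^sup>2 * \<epsilon>\<^sup>2" "0 \<le> 4 * D\<^sup>2 * (\<alpha> + 1)"
      using assms(8,13,14) by (simp_all add: gamma_def)
    from div_nat_ceiling_div_le[OF this] show ?thesis
      using assms(8) by (simp add: K_def gamma_def field_simps power2_eq_square)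
  qed
  finally have dist: "(\<Sum>k<K \<epsilon>. \<theta> k * d k) / (\<Sum>k<K \<epsilon>. \<theta> k) \<le> \<gamma>\<^sup>2 * \<epsilon>\<^sup>2" .
  have "infdist 0 (subdiff_plus_ind X Y f (zbar (zs k))) \<le> 2 * \<rho> * norm (zs k - zbar (zs k))" for k
    unfolding zbar using infdist_subdiff_plus_ind_prox_sol_le[OF Z assms(10,11)] assms(8,9) by simp
  then have "(infdist 0 (subdiff_plus_ind X Y f (zbar (zs k))))\<^sup>2 \<le> (2 * \<rho>)\<^sup>2 * d k" for k
    unfolding d_def power_mult_distrib[symmetric] by (rule power_mono) (rule infdist_nonneg)
  with weighted_average_scale_le[of \<theta>]
  have "(\<Sum>k<K \<epsilon>. \<theta> k * (infdist 0 (subdiff_plus_ind X Y f (zbar (zs k))))\<^sup>2) / (\<Sum>k<K \<epsilon>. \<theta> k)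
      \<le> (2 * \<rho>)\<^sup>2 * ((\<Sum>k<K \<epsilon>. \<theta> k * d k) / (\<Sum>k<K \<epsilon>. \<theta> k))"
    by (simp add: theta_def)
  also have "\<dots> \<le> (2 * \<rho>)\<^sup>2 * (\<gamma>\<^sup>2 * \<epsilon>\<^sup>2)"
    using dist by (rule mult_left_mono) simp
  also have "\<dots> = \<epsilon>\<^sup>2"
    using assms(8) by (simp add: gamma_def power2_eq_square)
  finally show ?thesis
    using dist total_inner_iterations_bigo[OF assms(8), of L "16 * \<rho>\<^sup>2 * D\<^sup>2 * (\<alpha> + 1)"] assms(13)
    unfolding d_def K_def T_def by simp
qed

end
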